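(* $\frac{\partial^2}{\partial y^2}\zeta(3,z)\ge 4>0$ for all $z=x+iy$ with $x\in\mathbb{R}$ and $y\in[\frac{\sqrt3}{2},\infty)$.
   Context: For $s>1$ and $z=x+iy$ with $y>0$, $\zeta(s,z)=\sum_{(m,n)\in\mathbb{Z}^2\setminus\{0\}}\frac{y^s}{|mz+n|^{2s}}$. *)

theory Defs
  imports "HOL-Analysis.Analysis"
begin

text \<open>The series converges absolutely for s > 1, so the unordered sum infsum is the sum.\<close>
definition epstein_zeta :: "real \<Rightarrow> complex \<Rightarrow> real" where
  "epstein_zeta s z =
     (\<Sum>\<^sub>\<infinity>(m,n)\<in>(UNIV :: (int \<times> int) set) - {(0,0)}.
        (Im z) powr s / (cmod (of_int m * z + of_int n)) powr (2 * s))"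

end

(*
  Write zeta(3, x + i t) as the sum of t^3 / w^3 over (m, n) ~= (0, 0), where
  w = (m x + n)^2 + m^2 t^2. Near t = y every term and its first two t-derivatives are
  dominated by a multiple of the summable w(y/2)^-3, so the series can be differentiated
  twice termwise. With c = m^2 y^2 and v = w / c >= 1 the (m, n)-term of the second
  derivative is 6 y / c^3 * (v^2 - 7 v + 8) / v^5 for m ~= 0, and 6 y / n^6 for m = 0;
  the terms (0, 1) and (0, -1) alone give 12 y.
  The profile (v^2 - 7 v + 8) / v^5 is negative only for 34/25 < v < 146/25, where it is
  at least -147/2000, and at least -37/1000 once v >= 61/25. In a row m ~= 0 the integer
  n nearest to -m x has v <= 4/3, and at most 2 b |m| y other n have v < 1 + b^2. Hence
  the row loses at most 12 C / (|m|^5 y^4), C = 37/1000 * 11/5 + 73/2000 * 6/5, and since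
  the sum of |m|^-5 over m ~= 0 is at most 17/8, the second derivative is at least
  12 y - 17/8 * 12 C / y^4 >= 4 for y >= sqrt 3 / 2.
*)
theory Submission
  imports Defs
begin

section \<open>Termwise differentiation of unordered sums\<close>

lemma infsum_eq_suminf_bij:
  fixes h :: "'k \<Rightarrow> real"
  assumes e: "bij_betw e UNIV U" and h: "h summable_on U"
  shows "(\<Sum>\<^sub>\<infinity>k\<in>U. h k) = (\<Sum>i. h (e i))"
proof -
  have "(\<lambda>i. h (e i)) summable_on UNIV"
    using summable_on_reindex_bij_betw[OF e, of h] h by simp
  then have "(\<lambda>i. h (e i)) sums (\<Sum>\<^sub>\<infinity>i. h (e i))"
    by (intro has_sum_imp_sums has_sum_infsum)
  then show ?thesis
    using infsum_reindex_bij_betw[OF e, of h] by (simp add: sums_iff)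
qed

lemma has_real_derivative_infsum:
  fixes f f' :: "'k \<Rightarrow> real \<Rightarrow> real" and M :: "'k \<Rightarrow> real"
  assumes U: "countable U"
    and S: "open S" "convex S" "t \<in> S"
    and f': "\<And>k s. k \<in> U \<Longrightarrow> s \<in> S \<Longrightarrow> (f k has_real_derivative f' k s) (at s)"
    and f_le: "\<And>k s. k \<in> U \<Longrightarrow> s \<in> S \<Longrightarrow> \<bar>f k s\<bar> \<le> M k"
    and f'_le: "\<And>k s. k \<in> U \<Longrightarrow> s \<in> S \<Longrightarrow> \<bar>f' k s\<bar> \<le> M k"
    and M: "M summable_on U"
  shows "((\<lambda>s. \<Sum>\<^sub>\<infinity>k\<in>U. f k s) has_real_derivative (\<Sum>\<^sub>\<infinity>k\<in>U. f' k t)) (at t)"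
proof (cases "finite U")
  case True
  have "((\<lambda>s. \<Sum>k\<in>U. f k s) has_real_derivative (\<Sum>k\<in>U. f' k t)) (at t)"
    by (rule DERIV_sum) (rule f'[OF _ S(3)])
  with True show ?thesis
    by simp
next
  case False
  define e where "e = from_nat_into U"
  have e: "bij_betw e UNIV U"
    unfolding e_def using U False by (rule bij_betw_from_nat_into)
  have eU: "e i \<in> U" for i
    using e by (auto simp: bij_betw_def)
  have "(\<lambda>i. M (e i)) summable_on UNIV"
    using summable_on_reindex_bij_betw[OF e, of M] M by simp
  then have Me: "summable (\<lambda>i. M (e i))"
    by (rule summable_on_imp_summable)
  have infsum_eq_suminf: "(\<Sum>\<^sub>\<infinity>k\<in>U. h k) = (\<Sum>i. h (e i))"
    if h_le: "\<And>k. k \<in> U \<Longrightarrow> \<bar>h k\<bar> \<le> M k" for h :: "'k \<Rightarrow> real"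
  proof (rule infsum_eq_suminf_bij[OF e])
    have "(\<lambda>k. norm (h k)) summable_on U"
      by (rule summable_on_comparison_test[OF M]) (simp_all add: h_le)
    then show "h summable_on U"
      by (rule abs_summable_summable)
  qed
  have "\<And>i s. s \<in> S \<Longrightarrow> (f (e i) has_real_derivative f' (e i) s) (at s within S)"
    by (rule has_field_derivative_at_within) (simp add: f' eU)
  moreover have "uniformly_convergent_on S (\<lambda>n s. \<Sum>i<n. f' (e i) s)"
    by (rule Weierstrass_m_test'_ev[OF always_eventually Me]) (simp add: f'_le eU)
  moreover have "summable (\<lambda>i. f (e i) t)"
    by (rule summable_comparison_test'[OF Me]) (simp add: f_le eU S(3))
  ultimately have "((\<lambda>s. \<Sum>i. f (e i) s) has_real_derivative (\<Sum>i. f' (e i) t)) (at t)"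
    using S by (intro has_field_derivative_series'(2)) (auto simp: interior_open)
  moreover have "\<forall>\<^sub>F s in nhds t. (\<Sum>i. f (e i) s) = (\<Sum>\<^sub>\<infinity>k\<in>U. f k s)"
    using eventually_nhds_in_open[OF S(1,3)]
    by (rule eventually_mono) (simp add: infsum_eq_suminf f_le)
  moreover have "(\<Sum>i. f' (e i) t) = (\<Sum>\<^sub>\<infinity>k\<in>U. f' k t)"
    by (simp add: infsum_eq_suminf f'_le S(3))
  ultimately show ?thesis
    using DERIV_cong_ev[OF refl] by metis
qed

section \<open>The terms of the series and their derivatives\<close>

(* The (m, n)-term of epstein_zeta 3 (Complex x t) is zeta3_term ((m x + n)^2) (m^2) t. *)
definition zeta3_term :: "real \<Rightarrow> real \<Rightarrow> real \<Rightarrow> real" where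
  "zeta3_term A B t = t^3 / (A + B * t^2)^3"

definition zeta3_term_deriv :: "real \<Rightarrow> real \<Rightarrow> real \<Rightarrow> real" where
  "zeta3_term_deriv A B t = 3 * t^2 / (A + B * t^2)^3 - 6 * B * t^4 / (A + B * t^2)^4"

definition zeta3_term_deriv2 :: "real \<Rightarrow> real \<Rightarrow> real \<Rightarrow> real" where
  "zeta3_term_deriv2 A B t =
     6 * t / (A + B * t^2)^3 - 42 * B * t^3 / (A + B * t^2)^4 + 48 * B^2 * t^5 / (A + B * t^2)^5"

lemma has_real_derivative_zeta3_term:
  assumes "A + B * t^2 \<noteq> 0"
  shows "(zeta3_term A B has_real_derivative zeta3_term_deriv A B t) (at t)"
proof -
  let ?w = "A + B * t^2"
  let ?D = "(3 * t^2 * ?w^3 - t^3 * (3 * ?w^2 * (B * (2 * t)))) / (?w^3 * ?w^3)"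
  have "(zeta3_term A B has_real_derivative ?D) (at t)"
    unfolding zeta3_term_def [abs_def] using assms
    by (intro derivative_eq_intros DERIV_quotient) (auto intro!: derivative_eq_intros)
  moreover have "(3 * t^2 * w^3 - t^3 * (3 * w^2 * (B * (2 * t)))) / (w^3 * w^3)
      = 3 * t^2 / w^3 - 6 * B * t^4 / w^4" if "w \<noteq> 0" for w
    using that by (simp add: field_simps eval_nat_numeral)
  ultimately show ?thesis
    unfolding zeta3_term_deriv_def using assms by simp
qed

lemma has_real_derivative_zeta3_term_deriv:
  assumes "A + B * t^2 \<noteq> 0"
  shows "(zeta3_term_deriv A B has_real_derivative zeta3_term_deriv2 A B t) (at t)"
proof -
  let ?w = "A + B * t^2"
  let ?D = "(3 * (2 * t) * ?w^3 - 3 * t^2 * (3 * ?w^2 * (B * (2 * t)))) / (?w^3 * ?w^3)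
    - (6 * B * (4 * t^3) * ?w^4 - 6 * B * t^4 * (4 * ?w^3 * (B * (2 * t)))) / (?w^4 * ?w^4)"
  have "(zeta3_term_deriv A B has_real_derivative ?D) (at t)"
    unfolding zeta3_term_deriv_def [abs_def] using assms
    by (intro derivative_eq_intros DERIV_quotient) (auto intro!: derivative_eq_intros)
  moreover have "(3 * (2 * t) * w^3 - 3 * t^2 * (3 * w^2 * (B * (2 * t)))) / (w^3 * w^3)
      - (6 * B * (4 * t^3) * w^4 - 6 * B * t^4 * (4 * w^3 * (B * (2 * t)))) / (w^4 * w^4)
      = 6 * t / w^3 - 42 * B * t^3 / w^4 + 48 * B^2 * t^5 / w^5" if "w \<noteq> 0" for w
    using that by (simp add: field_simps eval_nat_numeral)
  ultimately show ?thesis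
    unfolding zeta3_term_deriv2_def using assms by simp
qed

lemma abs_zeta3_terms_le:
  assumes A: "0 \<le> A" and B: "0 \<le> B" and t: "0 < a" "a \<le> t" "t \<le> b"
    and pos: "0 < A + B * a^2"
  defines "K \<equiv> 96 * (b^3 + b^2 + b) / (A + B * a^2)^3"
  shows "\<bar>zeta3_term A B t\<bar> \<le> K"
    and "\<bar>zeta3_term_deriv A B t\<bar> \<le> K"
    and "\<bar>zeta3_term_deriv2 A B t\<bar> \<le> K"
proof -
  define w where "w = A + B * t^2"
  define r where "r = B * t^2 / w"
  have "A + B * a^2 \<le> w"
    unfolding w_def using B t by (intro add_left_mono mult_left_mono power_mono) auto
  then have w: "0 < w" and w_inv: "1 / w^3 \<le> 1 / (A + B * a^2)^3"
    using pos by (auto intro!: divide_left_mono power_mono)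
  have r: "0 \<le> r" "r \<le> 1"
    unfolding r_def using A B w by (auto simp: w_def divide_simps)
  have b: "0 < b"
    using t by linarith
  have le_K: "\<bar>s * P / w^3\<bar> \<le> K"
    if "0 \<le> s" "s \<le> b^3 + b^2 + b" "\<bar>P\<bar> \<le> 96" for s P
  proof -
    have "\<bar>s * P / w^3\<bar> = s * (1 / w^3) * \<bar>P\<bar>"
      using that w by (simp add: abs_mult)
    also have "\<dots> \<le> (b^3 + b^2 + b) * (1 / (A + B * a^2)^3) * 96"
      using that w w_inv b pos by (intro mult_mono) auto
    also have "\<dots> = K"
      unfolding K_def by simp
    finally show ?thesis .
  qed
  have "0 \<le> t^k" "t^k \<le> b^k" "0 \<le> b^k" for k
    using t by (auto intro: power_mono)
  then have t_le: "t \<le> b^3 + b^2 + b" "t^2 \<le> b^3 + b^2 + b" "t^3 \<le> b^3 + b^2 + b"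
    by (smt (verit) power_one_right)+
  have "zeta3_term A B t = t^3 * 1 / w^3"
    "zeta3_term_deriv A B t = t^2 * (3 - 6 * r) / w^3"
    "zeta3_term_deriv2 A B t = t * (6 - 42 * r + 48 * r^2) / w^3"
    unfolding zeta3_term_def zeta3_term_deriv_def zeta3_term_deriv2_def r_def w_def[symmetric]
    using w by (simp_all add: field_simps eval_nat_numeral)
  moreover have "\<bar>3 - 6 * r\<bar> \<le> 96" "\<bar>6 - 42 * r + 48 * r^2\<bar> \<le> 96"
    using r mult_left_le_one_le[of r r] zero_le_power2[of r]
    unfolding abs_le_iff power2_eq_square by linarith+
  ultimately show "\<bar>zeta3_term A B t\<bar> \<le> K" "\<bar>zeta3_term_deriv A B t\<bar> \<le> K"
    "\<bar>zeta3_term_deriv2 A B t\<bar> \<le> K"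
    using le_K[of "t^3" 1] le_K[of "t^2" "3 - 6 * r"] le_K[of t "6 - 42 * r + 48 * r^2"] t_le t
    by simp_all
qed

section \<open>Summability over the lattice\<close>

lemma one_le_square_of_int:
  fixes k :: int
  assumes "k \<noteq> 0"
  shows "1 \<le> (of_int k :: real)^2"
proof -
  have "1 \<le> \<bar>of_int k :: real\<bar>"
    using assms by linarith
  then show ?thesis
    using power_mono[of 1 "\<bar>of_int k :: real\<bar>" 2] by simp
qed

lemma one_le_sum_squares_of_int:
  fixes m n :: int
  assumes "(m, n) \<noteq> (0, 0)"
  shows "1 \<le> (of_int m)^2 + (of_int n :: real)^2"
proof (cases "m = 0")
  case True
  with assms show ?thesis
    using one_le_square_of_int[of n] by simp
next
  case False
  then show ?thesis
    using one_le_square_of_int[of m] zero_le_power2[of "of_int n :: real"] by linarith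
qed

lemma lattice_form_ge_sum_squares:
  fixes M N x a :: real
  assumes "0 < a"
  shows "min 1 (a^2) / (2 + 2 * x^2) * (M^2 + N^2) \<le> (M * x + N)^2 + M^2 * a^2"
proof -
  define c where "c = min 1 (a^2)"
  have c: "0 < c" "c \<le> 1" "c \<le> a^2"
    unfolding c_def using assms by auto
  have "N^2 \<le> 2 * (M * x + N)^2 + 2 * (M * x)^2"
    using sum_squares_ge_zero[of "2 * M * x + N" 0] by (simp add: power2_eq_square algebra_simps)
  moreover have "(2 + 2 * x^2) * ((M * x + N)^2 + M^2)
      = 2 * (M * x + N)^2 + 2 * (M * x)^2 + 2 * M^2 + 2 * (x^2 * (M * x + N)^2)"
    by (simp add: algebra_simps)
  moreover have "0 \<le> M^2" "0 \<le> x^2 * (M * x + N)^2"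
    by simp_all
  ultimately have "M^2 + N^2 \<le> (2 + 2 * x^2) * ((M * x + N)^2 + M^2)"
    by linarith
  then have "c / (2 + 2 * x^2) * (M^2 + N^2) \<le> c / (2 + 2 * x^2) * ((2 + 2 * x^2) * ((M * x + N)^2 + M^2))"
    using c by (intro mult_left_mono) auto
  also have "\<dots> = c * ((M * x + N)^2 + M^2)"
    by (simp add: add_nonneg_eq_0_iff)
  also have "\<dots> \<le> (M * x + N)^2 + M^2 * a^2"
    using c mult_right_mono[of c 1 "(M * x + N)^2"] mult_left_mono[of c "a^2" "M^2"]
    by (simp add: distrib_left mult.commute)
  finally show ?thesis
    unfolding c_def .
qed

lemma lattice_form_pos:
  fixes x t :: real and m n :: int
  assumes t: "0 < t" and mn: "(m, n) \<noteq> (0, 0)"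
  shows "0 < (of_int m * x + of_int n)^2 + (of_int m)^2 * t^2"
proof -
  have "0 < min 1 (t^2) / (2 + 2 * x^2) * ((of_int m)^2 + (of_int n)^2)"
    using t one_le_sum_squares_of_int[OF mn] by (simp add: add_pos_nonneg)
  then show ?thesis
    using lattice_form_ge_sum_squares[OF t, of x "of_int m" "of_int n"] by linarith
qed

lemma inverse_cube_le_product:
  fixes P Q :: real
  assumes P: "0 \<le> P" and Q: "0 \<le> Q" and PQ: "1 \<le> P + Q"
  shows "1 / (P + Q)^3 \<le> 4 * (1 / (1 + P) * (1 / (1 + Q)))"
proof -
  have "(1 + P + Q)^2 = (1 + P) * (1 + Q) + (P + Q + P * P + Q * Q + P * Q)"
    by (simp add: power2_eq_square algebra_simps)
  then have "(1 + P) * (1 + Q) \<le> (1 + P + Q)^2"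
    using P Q by simp
  also have "\<dots> \<le> (2 * (P + Q))^2"
    using P Q PQ by (intro power_mono) auto
  also have "\<dots> = 4 * (P + Q)^2"
    by (simp add: power2_eq_square algebra_simps)
  also have "\<dots> \<le> 4 * (P + Q)^3"
    using PQ power_increasing[of 2 3 "P + Q"] by simp
  finally show ?thesis
    using P Q PQ by (simp add: divide_simps add_pos_nonneg)
qed

lemma summable_on_inverse_one_plus_square_int:
  "(\<lambda>k::int. 1 / (1 + (of_int k)^2 :: real)) summable_on UNIV"
proof -
  let ?h = "\<lambda>k::int. 1 / (1 + (of_int k)^2 :: real)"
  have "summable (\<lambda>n. ?h (int n))"
  proof (rule summable_comparison_test'[OF inverse_power_summable[of 2, where 'a=real]])
    fix n :: nat
    assume "1 \<le> n"
    then show "norm (?h (int n)) \<le> inverse (real n ^ 2)"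
      by (simp add: inverse_eq_divide frac_le)
  qed simp
  then have "(\<lambda>n. ?h (int n)) summable_on UNIV"
    by (subst summable_on_UNIV_nonneg_real_iff) auto
  then have "?h summable_on range int" "?h summable_on range (\<lambda>n. - int n)"
    by (subst summable_on_reindex; simp add: inj_on_def o_def)+
  then have "?h summable_on (range int \<union> range (\<lambda>n. - int n))"
    by (rule summable_on_union)
  moreover have "k \<in> range int \<union> range (\<lambda>n. - int n)" for k
    by (cases k rule: int_cases2) auto
  ultimately show ?thesis
    by (metis UNIV_eq_I)
qed

lemma summable_on_inverse_one_plus_square_int_pair:
  "(\<lambda>(m::int, n::int). 1 / (1 + (of_int m)^2) * (1 / (1 + (of_int n)^2) :: real)) summable_on UNIV"
proof -
  let ?h = "\<lambda>k::int. 1 / (1 + (of_int k)^2 :: real)"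
  have "(\<lambda>p. ?h (fst p) * ?h (snd p)) summable_on UNIV \<times> UNIV"
  proof (rule summable_on_SigmaI)
    show "((\<lambda>n. ?h (fst (m, n)) * ?h (snd (m, n))) has_sum ?h m * (\<Sum>\<^sub>\<infinity>n. ?h n)) UNIV" for m
      unfolding fst_conv snd_conv
      by (intro has_sum_cmult_right has_sum_infsum summable_on_inverse_one_plus_square_int)
    show "(\<lambda>m. ?h m * (\<Sum>\<^sub>\<infinity>n. ?h n)) summable_on UNIV"
      using summable_on_inverse_one_plus_square_int by (rule summable_on_cmult_left)
  qed (simp add: add_pos_nonneg)
  then show ?thesis
    by (simp add: case_prod_unfold)
qed

lemma inverse_lattice_form_cube_le:
  fixes x a :: real and m n :: int
  assumes a: "0 < a" and mn: "(m, n) \<noteq> (0, 0)"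
  defines "\<delta> \<equiv> min 1 (a^2) / (2 + 2 * x^2)"
  shows "1 / ((of_int m * x + of_int n)^2 + (of_int m)^2 * a^2)^3
    \<le> 4 / \<delta>^3 * (1 / (1 + (of_int m)^2) * (1 / (1 + (of_int n)^2)))"
proof -
  define s where "s = (of_int m)^2 + (of_int n :: real)^2"
  have s: "1 \<le> s"
    unfolding s_def using mn by (rule one_le_sum_squares_of_int)
  define q where "q = (of_int m * x + of_int n)^2 + (of_int m)^2 * a^2"
  have "0 < \<delta>"
    unfolding \<delta>_def using a by (simp add: add_pos_nonneg)
  then have \<delta>s: "0 < \<delta> * s"
    using s by simp
  have q: "\<delta> * s \<le> q"
    using lattice_form_ge_sum_squares[OF a, of x "of_int m" "of_int n"] unfolding \<delta>_def s_def q_def .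
  then have "(\<delta> * s)^3 \<le> q^3"
    using \<delta>s by (intro power_mono) auto
  then have "1 / q^3 \<le> 1 / (\<delta> * s)^3"
    using \<delta>s by (intro frac_le) auto
  also have "\<dots> = 1 / \<delta>^3 * (1 / s^3)"
    by (simp add: power_mult_distrib)
  also have "\<dots> \<le> 1 / \<delta>^3 * (4 * (1 / (1 + (of_int m)^2) * (1 / (1 + (of_int n)^2))))"
    using inverse_cube_le_product[of "(of_int m)^2" "(of_int n)^2"] s \<open>0 < \<delta>\<close>
    unfolding s_def by (intro mult_left_mono) auto
  finally show ?thesis
    unfolding q_def by simp
qed

lemma summable_on_inverse_lattice_form_cube:
  fixes x a :: real
  assumes a: "0 < a"
  shows "(\<lambda>(m::int, n::int). 1 / ((of_int m * x + of_int n)^2 + (of_int m)^2 * a^2)^3)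
    summable_on UNIV - {(0, 0)}"
proof -
  define C where "C = 4 / (min 1 (a^2) / (2 + 2 * x^2))^3"
  have "(\<lambda>(m::int, n::int). 1 / (1 + (of_int m)^2) * (1 / (1 + (of_int n)^2) :: real))
      summable_on UNIV - {(0, 0)}"
    by (rule summable_on_subset_banach[OF summable_on_inverse_one_plus_square_int_pair]) simp
  then have "(\<lambda>p. C * (case p of (m, n) \<Rightarrow> 1 / (1 + (of_int m)^2) * (1 / (1 + (of_int n)^2))))
      summable_on UNIV - {(0, 0)}"
    by (rule summable_on_cmult_right)
  then show ?thesis
  proof (rule summable_on_comparison_test)
    fix p :: "int \<times> int"
    assume "p \<in> UNIV - {(0, 0)}"
    then show "(case p of (m, n) \<Rightarrow> 1 / ((of_int m * x + of_int n)^2 + (of_int m)^2 * a^2)^3)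
        \<le> C * (case p of (m, n) \<Rightarrow> 1 / (1 + (of_int m)^2) * (1 / (1 + (of_int n)^2)))"
      using inverse_lattice_form_cube_le[OF a, of "fst p" "snd p" x] unfolding C_def
      by (simp add: case_prod_unfold)
  qed (simp add: case_prod_unfold)
qed

section \<open>The second derivative as a lattice sum\<close>

lemma epstein_zeta_3_eq:
  fixes x t :: real
  assumes t: "0 < t"
  shows "epstein_zeta 3 (Complex x t) =
    (\<Sum>\<^sub>\<infinity>(m, n)\<in>UNIV - {(0, 0)}. zeta3_term ((of_int m * x + of_int n)^2) ((of_int m)^2) t)"
proof -
  have "t powr 3 / cmod (of_int m * Complex x t + of_int n) powr (2 * 3)
      = zeta3_term ((of_int m * x + of_int n)^2) ((of_int m)^2) t"
    if mn: "(m, n) \<noteq> (0, 0)" for m n :: int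
  proof -
    define q where "q = (of_int m * x + of_int n)^2 + (of_int m)^2 * t^2"
    have q: "0 < q"
      unfolding q_def using lattice_form_pos[OF t mn] .
    have "of_int m * Complex x t + of_int n = Complex (of_int m * x + of_int n) (of_int m * t)"
      by (simp add: complex_eq_iff)
    then have "cmod (of_int m * Complex x t + of_int n) = sqrt q"
      by (simp add: q_def complex_norm power_mult_distrib)
    moreover have "sqrt q powr (2 * 3) = sqrt q ^ (2 * 3)"
      using q powr_realpow[of "sqrt q" "2 * 3"] by simp
    moreover have "sqrt q ^ (2 * 3) = q^3"
      using q by (simp only: power_mult real_sqrt_pow2 less_imp_le)
    ultimately have "cmod (of_int m * Complex x t + of_int n) powr (2 * 3) = q^3"
      by simp
    moreover have "t powr 3 = t^3"
      using t by (simp add: powr_realpow)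
    ultimately show ?thesis
      unfolding zeta3_term_def q_def by simp
  qed
  then show ?thesis
    unfolding epstein_zeta_def by (intro infsum_cong) auto
qed

lemma has_real_derivative_zeta3_sums:
  fixes A B :: "'k \<Rightarrow> real"
  assumes U: "countable U" and t: "0 < a" "a < t" "t < b"
    and A: "\<And>k. k \<in> U \<Longrightarrow> 0 \<le> A k" and B: "\<And>k. k \<in> U \<Longrightarrow> 0 \<le> B k"
    and pos: "\<And>k. k \<in> U \<Longrightarrow> 0 < A k + B k * a^2"
    and summable: "(\<lambda>k. 1 / (A k + B k * a^2)^3) summable_on U"
  shows "((\<lambda>s. \<Sum>\<^sub>\<infinity>k\<in>U. zeta3_term (A k) (B k) s)
      has_real_derivative (\<Sum>\<^sub>\<infinity>k\<in>U. zeta3_term_deriv (A k) (B k) t)) (at t)"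
    and "((\<lambda>s. \<Sum>\<^sub>\<infinity>k\<in>U. zeta3_term_deriv (A k) (B k) s)
      has_real_derivative (\<Sum>\<^sub>\<infinity>k\<in>U. zeta3_term_deriv2 (A k) (B k) t)) (at t)"
    and "(\<lambda>k. zeta3_term_deriv2 (A k) (B k) t) summable_on U"
proof -
  define S where "S = {a<..<b}"
  define M where "M k = 96 * (b^3 + b^2 + b) / (A k + B k * a^2)^3" for k
  have S: "open S" "convex S" "t \<in> S"
    unfolding S_def using t by auto
  have M: "M summable_on U"
    unfolding M_def using summable_on_cmult_right[OF summable, of "96 * (b^3 + b^2 + b)"] by simp
  have bounds: "\<bar>zeta3_term (A k) (B k) s\<bar> \<le> M k" "\<bar>zeta3_term_deriv (A k) (B k) s\<bar> \<le> M k"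
      "\<bar>zeta3_term_deriv2 (A k) (B k) s\<bar> \<le> M k"
    if "k \<in> U" "s \<in> S" for k s
    using abs_zeta3_terms_le[OF A[OF that(1)] B[OF that(1)] t(1) _ _ pos[OF that(1)], of s b] that
    unfolding S_def M_def by auto
  have nonzero: "A k + B k * s^2 \<noteq> 0" if "k \<in> U" "s \<in> S" for k s
  proof -
    have "a^2 \<le> s^2"
      using that t unfolding S_def by (intro power_mono) auto
    then have "A k + B k * a^2 \<le> A k + B k * s^2"
      using B[OF that(1)] by (intro add_left_mono mult_left_mono)
    then show ?thesis
      using pos[OF that(1)] by linarith
  qed
  show "((\<lambda>s. \<Sum>\<^sub>\<infinity>k\<in>U. zeta3_term (A k) (B k) s)
      has_real_derivative (\<Sum>\<^sub>\<infinity>k\<in>U. zeta3_term_deriv (A k) (B k) t)) (at t)"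
    using U S M bounds nonzero
    by (intro has_real_derivative_infsum has_real_derivative_zeta3_term) auto
  show "((\<lambda>s. \<Sum>\<^sub>\<infinity>k\<in>U. zeta3_term_deriv (A k) (B k) s)
      has_real_derivative (\<Sum>\<^sub>\<infinity>k\<in>U. zeta3_term_deriv2 (A k) (B k) t)) (at t)"
    using U S M bounds nonzero
    by (intro has_real_derivative_infsum has_real_derivative_zeta3_term_deriv) auto
  have "(\<lambda>k. norm (zeta3_term_deriv2 (A k) (B k) t)) summable_on U"
    by (rule summable_on_comparison_test[OF M]) (use bounds(3) S(3) in auto)
  then show "(\<lambda>k. zeta3_term_deriv2 (A k) (B k) t) summable_on U"
    by (rule abs_summable_summable)
qed

lemma epstein_zeta_3_deriv2_has_sum:
  fixes x y :: real
  assumes y: "0 < y"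
  shows "((\<lambda>(m, n). zeta3_term_deriv2 ((of_int m * x + of_int n)^2) ((of_int m)^2) y)
    has_sum deriv (deriv (\<lambda>t. epstein_zeta 3 (Complex x t))) y) (UNIV - {(0, 0)})"
proof -
  define U :: "(int \<times> int) set" where "U = UNIV - {(0, 0)}"
  define A where "A k = (of_int (fst k) * x + of_int (snd k))^2" for k :: "int \<times> int"
  define B where "B k = (of_int (fst k) :: real)^2" for k :: "int \<times> int"
  define F where "F f s = (\<Sum>\<^sub>\<infinity>k\<in>U. f (A k) (B k) s)" for f :: "real \<Rightarrow> real \<Rightarrow> real \<Rightarrow> real" and s
  define S where "S = {y / 2<..<2 * y}"
  have S: "open S" "y \<in> S"
    unfolding S_def using y by auto
  have summable: "(\<lambda>k. 1 / (A k + B k * (y / 2)^2)^3) summable_on U"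
    using summable_on_inverse_lattice_form_cube[of "y / 2" x] y
    unfolding U_def A_def B_def by (simp add: case_prod_unfold)
  have pos: "0 < A k + B k * (y / 2)^2" if "k \<in> U" for k
    using lattice_form_pos[of "y / 2" "fst k" "snd k" x] y that unfolding U_def A_def B_def by auto
  have derivs: "(F zeta3_term has_real_derivative F zeta3_term_deriv t) (at t)"
      "(F zeta3_term_deriv has_real_derivative F zeta3_term_deriv2 t) (at t)"
      "(\<lambda>k. zeta3_term_deriv2 (A k) (B k) t) summable_on U"
    if "t \<in> S" for t
  proof -
    have "0 < y / 2" "y / 2 < t" "t < 2 * y"
      using y that unfolding S_def by auto
    from has_real_derivative_zeta3_sums[OF _ this _ _ pos summable]
    show "(F zeta3_term has_real_derivative F zeta3_term_deriv t) (at t)"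
      "(F zeta3_term_deriv has_real_derivative F zeta3_term_deriv2 t) (at t)"
      "(\<lambda>k. zeta3_term_deriv2 (A k) (B k) t) summable_on U"
      unfolding F_def A_def B_def by (simp_all add: U_def)
  qed
  have E: "F zeta3_term t = epstein_zeta 3 (Complex x t)" if "t \<in> S" for t
    using epstein_zeta_3_eq[of t x] that y
    unfolding F_def U_def A_def B_def S_def by (simp add: case_prod_unfold)
  have E': "F zeta3_term_deriv t = deriv (\<lambda>t. epstein_zeta 3 (Complex x t)) t" if "t \<in> S" for t
    by (rule DERIV_imp_deriv [symmetric],
        rule has_field_derivative_transform_within_open[OF derivs(1)[OF that] S(1) that E])
  have "F zeta3_term_deriv2 y = deriv (deriv (\<lambda>t. epstein_zeta 3 (Complex x t))) y"
    by (rule DERIV_imp_deriv [symmetric],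
        rule has_field_derivative_transform_within_open[OF derivs(2)[OF S(2)] S E'])
  moreover have "((\<lambda>k. zeta3_term_deriv2 (A k) (B k) y) has_sum F zeta3_term_deriv2 y) U"
    unfolding F_def using derivs(3)[OF S(2)] by (rule has_sum_infsum)
  ultimately show ?thesis
    unfolding U_def A_def B_def by (simp add: case_prod_unfold)
qed

section \<open>The profile of a term\<close>

definition zeta3_profile :: "real \<Rightarrow> real" where
  "zeta3_profile v = (v^2 - 7 * v + 8) / v^5"

lemma zeta3_term_deriv2_eq_profile:
  fixes A B y :: real
  assumes A: "0 \<le> A" and B: "0 < B" and y: "0 < y"
  shows "zeta3_term_deriv2 A B y = 6 * y / (B * y^2)^3 * zeta3_profile (1 + A / (B * y^2))"
proof -
  define c where "c = B * y^2"
  define v where "v = 1 + A / c"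
  have c: "0 < c"
    unfolding c_def using B y by simp
  then have v: "0 < v"
    unfolding v_def using A by (simp add: add_pos_nonneg)
  have "A + B * y^2 = c * v" "B * y^3 = c * y" "B^2 * y^5 = c^2 * y"
    unfolding v_def c_def using B y by (simp_all add: field_simps eval_nat_numeral)
  then have "zeta3_term_deriv2 A B y = 6 * y / (c * v)^3 - 42 * (c * y) / (c * v)^4 + 48 * (c^2 * y) / (c * v)^5"
    unfolding zeta3_term_deriv2_def by (simp add: mult.assoc)
  also have "\<dots> = 6 * y / c^3 * zeta3_profile v"
    unfolding zeta3_profile_def using c v by (simp add: field_simps eval_nat_numeral)
  finally show ?thesis
    unfolding c_def v_def .
qed

lemma pow5_ge_tangent:
  fixes v p :: real
  assumes "0 \<le> v" "0 \<le> p"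
  shows "5 * p^4 * v - 4 * p^5 \<le> v^5"
proof -
  have "v^5 - (5 * p^4 * v - 4 * p^5) = (v - p)^2 * (v^3 + 2 * p * v^2 + 3 * p^2 * v + 4 * p^3)"
    by algebra
  moreover have "0 \<le> (v - p)^2 * (v^3 + 2 * p * v^2 + 3 * p^2 * v + 4 * p^3)"
    using assms by (intro mult_nonneg_nonneg add_nonneg_nonneg) auto
  ultimately show ?thesis
    by linarith
qed

lemma zeta3_profile_ge_iff:
  fixes v K :: real
  assumes "0 < v"
  shows "- K \<le> zeta3_profile v \<longleftrightarrow> 0 \<le> v^2 - 7 * v + 8 + K * v^5"
  unfolding zeta3_profile_def using assms by (simp add: pos_le_divide_eq algebra_simps)

lemma zeta3_profile_nonneg:
  fixes v :: real
  assumes v: "0 < v" "v \<le> 34/25 \<or> 146/25 \<le> v"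
  shows "0 \<le> zeta3_profile v"
proof -
  have "(34/25 - v) * (141/25 - v) = v^2 - 7 * v + 4794/625"
    "(v - 146/25) * (v - 29/25) = v^2 - 7 * v + 4234/625"
    by (simp_all add: field_simps power2_eq_square)
  moreover have "0 \<le> (34/25 - v) * (141/25 - v) \<or> 0 \<le> (v - 146/25) * (v - 29/25)"
    using v(2) by (auto intro: mult_nonneg_nonneg)
  ultimately have "0 \<le> v^2 - 7 * v + 4794/625 \<or> 0 \<le> v^2 - 7 * v + 4234/625"
    by simp
  then have "0 \<le> v^2 - 7 * v + 8 + 0 * v^5"
    by (elim disjE) linarith+
  then show ?thesis
    using zeta3_profile_ge_iff[OF v(1), of 0] by simp
qed

lemma zeta3_profile_ge_far:
  fixes v :: real
  assumes v: "61/25 \<le> v"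
  shows "- (37/1000) \<le> zeta3_profile v"
proof -
  have "5 * (61/25)^4 * v - 4 * (61/25)^5 \<le> v^5"
    using v by (intro pow5_ge_tangent) auto
  moreover have "0 \<le> (v - 61/25)^2"
    by simp
  ultimately have "0 \<le> v^2 - 7 * v + 8 + 37/1000 * v^5"
    using v by (simp add: power2_eq_square algebra_simps power_divide)
  then show ?thesis
    using zeta3_profile_ge_iff[of v "37/1000"] v by simp
qed

lemma zeta3_profile_ge:
  fixes v :: real
  assumes v: "0 < v"
  shows "- (147/2000) \<le> zeta3_profile v"
proof -
  have "5 * (7/4)^4 * v - 4 * (7/4)^5 \<le> v^5"
    using v by (intro pow5_ge_tangent) auto
  (* with v^5 replaced by its tangent at 7/4 a quadratic of negative discriminant is left *)
  moreover have "0 \<le> (v - 363853/204800)^2"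
    by simp
  ultimately have "0 \<le> v^2 - 7 * v + 8 + 147/2000 * v^5"
    by (simp add: power2_eq_square algebra_simps power_divide)
  then show ?thesis
    using zeta3_profile_ge_iff[OF v, of "147/2000"] by simp
qed

definition zeta3_profile_deficit :: "real \<Rightarrow> real" where
  "zeta3_profile_deficit v =
     37/1000 * of_bool (34/25 < v \<and> v < 146/25) + 73/2000 * of_bool (34/25 < v \<and> v < 61/25)"

lemma zeta3_profile_ge_deficit:
  fixes v :: real
  assumes "1 \<le> v"
  shows "- zeta3_profile_deficit v \<le> zeta3_profile v"
  using zeta3_profile_nonneg[of v] zeta3_profile_ge_far[of v] zeta3_profile_ge[of v] assms
  unfolding zeta3_profile_deficit_def by auto

section \<open>Counting the negative terms of a row\<close>

(* The integer floor (1/2 - s) nearest to -s is left out: in a row m it is the n with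
   v <= 4/3, where the profile is positive. *)
definition near_ints :: "real \<Rightarrow> real \<Rightarrow> int set" where
  "near_ints s B = {n. n \<noteq> \<lfloor>1/2 - s\<rfloor> \<and> \<bar>s + of_int n\<bar> < B}"

lemma abs_add_floor_half_le:
  fixes s :: real
  shows "\<bar>s + of_int \<lfloor>1/2 - s\<rfloor>\<bar> \<le> 1/2"
  using of_int_floor_le[of "1/2 - s"] real_of_int_floor_add_one_gt[of "1/2 - s"]
  unfolding abs_le_iff by linarith

lemma near_ints_finite_card:
  assumes B: "1/2 \<le> B"
  shows "finite (near_ints s B)" "real (card (near_ints s B)) \<le> 2 * B"
proof -
  define lo where "lo = \<lceil>- s - B\<rceil>"
  define hi where "hi = \<lfloor>B - s\<rfloor>"
  define n0 where "n0 = \<lfloor>1/2 - s\<rfloor>"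
  have sub: "near_ints s B \<subseteq> {lo..hi} - {n0}"
    unfolding near_ints_def lo_def hi_def n0_def
    by (auto simp: abs_less_iff ceiling_le_iff le_floor_iff)
  have "\<bar>s + of_int n0\<bar> \<le> 1/2"
    unfolding n0_def by (rule abs_add_floor_half_le)
  then have "- s - B \<le> of_int n0" "of_int n0 \<le> B - s"
    using B unfolding abs_le_iff by linarith+
  then have n0: "n0 \<in> {lo..hi}"
    unfolding lo_def hi_def by (simp add: ceiling_le_iff le_floor_iff)
  show "finite (near_ints s B)"
    using sub by (rule finite_subset) simp
  have "card (near_ints s B) \<le> card ({lo..hi} - {n0})"
    using sub by (intro card_mono) auto
  also have "\<dots> = nat (hi - lo)"
    using n0 by (simp add: card_Diff_singleton)
  finally have "real (card (near_ints s B)) \<le> real (nat (hi - lo))"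
    by simp
  also have "\<dots> = of_int (hi - lo)"
    using n0 by simp
  also have "\<dots> \<le> 2 * B"
    using of_int_floor_le[of "B - s"] le_of_int_ceiling[of "- s - B"]
    unfolding lo_def hi_def by linarith
  finally show "real (card (near_ints s B)) \<le> 2 * B" .
qed

lemma sum_of_bool_near_ints_le:
  assumes "finite N" "1/2 \<le> B"
  shows "(\<Sum>n\<in>N. of_bool (n \<in> near_ints s B)) \<le> 2 * (B :: real)"
proof -
  have "(\<Sum>n\<in>N. of_bool (n \<in> near_ints s B)) = real (card (N \<inter> near_ints s B))"
    using assms(1) by (simp add: of_bool_def sum.If_cases)
  also have "\<dots> \<le> real (card (near_ints s B))"
    using near_ints_finite_card(1)[OF assms(2)] by (simp add: card_mono)
  also have "\<dots> \<le> 2 * B"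
    using near_ints_finite_card(2)[OF assms(2)] .
  finally show ?thesis .
qed

lemma mem_near_ints:
  fixes s d b :: real and n :: int
  assumes d: "0 < d" "3/4 \<le> d^2" and b: "0 < b"
    and v: "34/25 < 1 + (s + of_int n)^2 / d^2" "1 + (s + of_int n)^2 / d^2 < 1 + b^2"
  shows "n \<in> near_ints s (b * d)"
proof -
  have "n \<noteq> \<lfloor>1/2 - s\<rfloor>"
  proof
    assume "n = \<lfloor>1/2 - s\<rfloor>"
    then have "\<bar>s + of_int n\<bar> \<le> 1/2"
      using abs_add_floor_half_le[of s] by simp
    then have "(s + of_int n)^2 \<le> (1/2)^2"
      by (metis abs_ge_zero power2_abs power_mono)
    then have "(s + of_int n)^2 / d^2 \<le> (1/2)^2 / (3/4)"
      using d by (intro frac_le) auto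
    with v(1) show False
      by (simp add: power_divide)
  qed
  moreover have "(s + of_int n)^2 < b^2 * d^2"
    using v(2) d by (simp add: pos_divide_less_eq)
  then have "\<bar>s + of_int n\<bar> < b * d"
    using power2_less_imp_less[of "\<bar>s + of_int n\<bar>" "b * d"] b d by (simp add: power_mult_distrib)
  ultimately show ?thesis
    unfolding near_ints_def by simp
qed

lemma neg_zeta3_term_deriv2_le_near_ints:
  fixes x y :: real and m n :: int
  assumes m: "m \<noteq> 0" and y: "0 < y" "3/4 \<le> y^2"
  shows "- zeta3_term_deriv2 ((of_int m * x + of_int n)^2) ((of_int m)^2) y
    \<le> 6 * y / ((of_int m)^2 * y^2)^3 *
      (37/1000 * of_bool (n \<in> near_ints (of_int m * x) (11/5 * (\<bar>of_int m\<bar> * y)))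
        + 73/2000 * of_bool (n \<in> near_ints (of_int m * x) (6/5 * (\<bar>of_int m\<bar> * y))))"
proof -
  define d where "d = \<bar>of_int m\<bar> * y"
  define v where "v = 1 + (of_int m * x + of_int n)^2 / d^2"
  have d_sq: "d^2 = (of_int m)^2 * y^2"
    unfolding d_def by (simp add: power_mult_distrib)
  have "1 * (3/4) \<le> (of_int m)^2 * y^2"
    using one_le_square_of_int[OF m] y by (intro mult_mono) auto
  then have d: "0 < d" "3/4 \<le> d^2"
    unfolding d_sq using m y by (simp_all add: d_def)
  have "zeta3_profile_deficit v
      \<le> 37/1000 * of_bool (n \<in> near_ints (of_int m * x) (11/5 * d))
        + 73/2000 * of_bool (n \<in> near_ints (of_int m * x) (6/5 * d))"
    using mem_near_ints[OF d, of "11/5" "of_int m * x" n] mem_near_ints[OF d, of "6/5" "of_int m * x" n]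
    unfolding zeta3_profile_deficit_def v_def by (auto simp: power_divide)
  moreover have "- zeta3_profile v \<le> zeta3_profile_deficit v"
    using zeta3_profile_ge_deficit[of v] d unfolding v_def by simp
  moreover have "- zeta3_term_deriv2 ((of_int m * x + of_int n)^2) ((of_int m)^2) y
      = 6 * y / (d^2)^3 * (- zeta3_profile v)"
    using zeta3_term_deriv2_eq_profile[of "(of_int m * x + of_int n)^2" "(of_int m)^2" y] m y
    unfolding d_sq v_def by simp
  moreover have "0 \<le> 6 * y / (d^2)^3"
    using y by simp
  ultimately show ?thesis
    unfolding d_sq[symmetric] d_def[symmetric] by (smt (verit) mult_left_mono)
qed

lemma sum_neg_part_zeta3_term_deriv2_row_le:
  fixes x y :: real and m :: int
  assumes m: "m \<noteq> 0" and y: "0 < y" "3/4 \<le> y^2" and N: "finite N"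
  shows "(\<Sum>n\<in>N. max 0 (- zeta3_term_deriv2 ((of_int m * x + of_int n)^2) ((of_int m)^2) y))
    \<le> 12 * (37/1000 * (11/5) + 73/2000 * (6/5)) / (\<bar>of_int m\<bar>^5 * y^4)"
proof -
  define k where "k = 6 * y / ((of_int m)^2 * y^2)^3"
  define M where "M = \<bar>of_int m :: real\<bar>"
  let ?near = "\<lambda>b n. of_bool (n \<in> near_ints (of_int m * x) (b * (M * y))) :: real"
  have k: "0 \<le> k"
    unfolding k_def using y by simp
  have M: "1 \<le> M"
    unfolding M_def using m by linarith
  have "(1/2)^2 \<le> y^2"
    using y by (simp add: power_divide)
  then have "1/2 \<le> y"
    by (rule power2_le_imp_le) (use y in simp)
  then have B: "1/2 \<le> b * (M * y)" if "1 \<le> b" for b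
  proof -
    have "1 \<le> b * M"
      using M that mult_mono[of 1 b 1 M] by simp
    then show ?thesis
      using \<open>1/2 \<le> y\<close> mult_mono[of 1 "b * M" "1/2" y] by (simp add: mult.assoc)
  qed
  have near_sum: "(\<Sum>n\<in>N. ?near b n) \<le> 2 * (b * (M * y))" if "1 \<le> b" for b
    using sum_of_bool_near_ints_le[OF N B[OF that]] .
  have "(\<Sum>n\<in>N. max 0 (- zeta3_term_deriv2 ((of_int m * x + of_int n)^2) ((of_int m)^2) y))
      \<le> (\<Sum>n\<in>N. k * (37/1000 * ?near (11/5) n + 73/2000 * ?near (6/5) n))"
    using neg_zeta3_term_deriv2_le_near_ints[OF m y] k
    unfolding k_def M_def by (intro sum_mono) simp
  also have "\<dots> = k * (37/1000 * (\<Sum>n\<in>N. ?near (11/5) n) + 73/2000 * (\<Sum>n\<in>N. ?near (6/5) n))"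
    by (simp only: sum_distrib_left sum.distrib[symmetric])
  also have "\<dots> \<le> k * (37/1000 * (2 * (11/5 * (M * y))) + 73/2000 * (2 * (6/5 * (M * y))))"
    using near_sum[of "11/5"] near_sum[of "6/5"] k by (intro mult_left_mono add_mono) simp_all
  also have "\<dots> = 12 * (37/1000 * (11/5) + 73/2000 * (6/5)) / (M^5 * y^4)"
    unfolding k_def M_def using m y by (simp add: field_simps eval_nat_numeral)
  finally show ?thesis
    unfolding M_def .
qed

section \<open>Summing over the rows\<close>

lemma sum_inverse_pow5_le: "(\<Sum>k=1..n. 1 / real k ^ 5) \<le> 17/16"
proof -
  have telescope: "(\<Sum>k=1..n. 1 / real k ^ 5) \<le> 17/16 - 1 / (16 * real n)" if "1 \<le> n" for n
    using that
  proof (induction n rule: nat_induct_at_least)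
    case base
    then show ?case
      by simp
  next
    case (Suc n)
    define r where "r = real n"
    have r: "1 \<le> r"
      unfolding r_def using Suc.hyps by simp
    have "16 * r \<le> (4 * r)^2"
      using r mult_left_mono[of 1 r r] by (simp add: power2_eq_square)
    also have "\<dots> \<le> ((r + 1)^2)^2"
      using r sum_squares_ge_zero[of "r - 1" 0]
      by (intro power_mono) (auto simp: power2_eq_square algebra_simps)
    finally have "16 * r * (r + 1) \<le> ((r + 1)^2)^2 * (r + 1)"
      using r by (intro mult_right_mono) auto
    also have "\<dots> = (r + 1)^5"
      by algebra
    finally have "1 / (r + 1)^5 \<le> 1 / (16 * r * (r + 1))"
      using r by (intro divide_left_mono) auto
    also have "\<dots> = 1 / (16 * r) - 1 / (16 * (r + 1))"
      using r by (simp add: field_simps)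
    finally have step: "1 / (r + 1)^5 \<le> 1 / (16 * r) - 1 / (16 * (r + 1))" .
    have "(\<Sum>k=1..Suc n. 1 / real k ^ 5) = (\<Sum>k=1..n. 1 / real k ^ 5) + 1 / (r + 1)^5"
      unfolding r_def by (simp add: add.commute)
    moreover have Suc_eq: "real (Suc n) = r + 1"
      unfolding r_def by simp
    ultimately show ?case
      using Suc.IH step unfolding Suc_eq r_def[symmetric] by linarith
  qed
  show ?thesis
  proof (cases "n = 0")
    case False
    then have "(\<Sum>k=1..n. 1 / real k ^ 5) \<le> 17/16 - 1 / (16 * real n)"
      by (intro telescope) simp
    also have "\<dots> \<le> 17/16"
      by simp
    finally show ?thesis .
  qed simp
qed

lemma sum_inverse_abs_pow5_int_le:
  fixes F :: "int set"
  assumes F: "finite F" "0 \<notin> F"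
  shows "(\<Sum>m\<in>F. 1 / \<bar>of_int m :: real\<bar>^5) \<le> 17/8"
proof -
  let ?f = "\<lambda>m::int. 1 / \<bar>of_int m :: real\<bar>^5"
  obtain N where N: "\<And>m. m \<in> F \<Longrightarrow> nat \<bar>m\<bar> \<le> N"
    using F(1) finite_nat_set_iff_bounded_le[of "(\<lambda>m. nat \<bar>m\<bar>) ` F"] by auto
  have "F \<subseteq> int ` {1..N} \<union> (\<lambda>k. - int k) ` {1..N}"
  proof
    fix m
    assume "m \<in> F"
    with F(2) N[of m] have "m \<noteq> 0" "nat \<bar>m\<bar> \<le> N"
      by auto
    then show "m \<in> int ` {1..N} \<union> (\<lambda>k. - int k) ` {1..N}"
    proof (cases m rule: int_cases2)
      case (nonneg n)
      with \<open>m \<noteq> 0\<close> \<open>nat \<bar>m\<bar> \<le> N\<close> have "n \<in> {1..N}"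
        by simp
      then show ?thesis
        unfolding nonneg by blast
    next
      case (nonpos n)
      with \<open>m \<noteq> 0\<close> \<open>nat \<bar>m\<bar> \<le> N\<close> have "n \<in> {1..N}"
        by simp
      then show ?thesis
        unfolding nonpos by blast
    qed
  qed
  then have "sum ?f F \<le> sum ?f (int ` {1..N} \<union> (\<lambda>k. - int k) ` {1..N})"
    by (intro sum_mono2) auto
  also have "\<dots> = sum ?f (int ` {1..N}) + sum ?f ((\<lambda>k. - int k) ` {1..N})"
    by (intro sum.union_disjoint) auto
  also have "\<dots> = (\<Sum>k=1..N. 1 / real k ^ 5) + (\<Sum>k=1..N. 1 / real k ^ 5)"
    by (simp add: sum.reindex inj_on_def)
  also have "\<dots> \<le> 17/8"
    using sum_inverse_pow5_le[of N] by simp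
  finally show ?thesis .
qed

lemma infsum_zeta3_term_deriv2_nonzero_rows_ge:
  fixes x y :: real
  assumes y: "0 < y" "3/4 \<le> y^2"
    and summable: "(\<lambda>(m, n). zeta3_term_deriv2 ((of_int m * x + of_int n)^2) ((of_int m)^2) y)
      summable_on (UNIV - {0}) \<times> UNIV"
  shows "- (17/8 * (12 * (37/1000 * (11/5) + 73/2000 * (6/5)) / y^4))
    \<le> (\<Sum>\<^sub>\<infinity>(m, n)\<in>(UNIV - {0}) \<times> UNIV. zeta3_term_deriv2 ((of_int m * x + of_int n)^2) ((of_int m)^2) y)"
proof -
  define C :: real where "C = 12 * (37/1000 * (11/5) + 73/2000 * (6/5))"
  define G where "G m n = zeta3_term_deriv2 ((of_int m * x + of_int n)^2) ((of_int m)^2) y" for m n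
  define R :: "(int \<times> int) set" where "R = (UNIV - {0}) \<times> UNIV"
  have "(\<Sum>p\<in>F. - G (fst p) (snd p)) \<le> 17/8 * (C / y^4)" if F: "finite F" "F \<subseteq> R" for F
  proof -
    define Ms where "Ms = fst ` F"
    define Ns where "Ns = snd ` F"
    have Ms: "finite Ms" "0 \<notin> Ms"
      unfolding Ms_def using F unfolding R_def by auto
    have Ns: "finite Ns"
      unfolding Ns_def using F by simp
    have "(\<Sum>p\<in>F. - G (fst p) (snd p)) \<le> (\<Sum>p\<in>F. max 0 (- G (fst p) (snd p)))"
      by (intro sum_mono) simp
    also have "\<dots> \<le> (\<Sum>p\<in>Ms \<times> Ns. max 0 (- G (fst p) (snd p)))"
      using Ms Ns unfolding Ms_def Ns_def by (intro sum_mono2) force+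
    also have "\<dots> = (\<Sum>m\<in>Ms. \<Sum>n\<in>Ns. max 0 (- G m n))"
      by (simp add: sum.cartesian_product case_prod_unfold)
    also have "\<dots> \<le> (\<Sum>m\<in>Ms. C / y^4 * (1 / \<bar>of_int m\<bar>^5))"
    proof (rule sum_mono)
      fix m
      assume "m \<in> Ms"
      then have "m \<noteq> 0"
        using Ms by auto
      from sum_neg_part_zeta3_term_deriv2_row_le[OF this y Ns, of x]
      show "(\<Sum>n\<in>Ns. max 0 (- G m n)) \<le> C / y^4 * (1 / \<bar>of_int m\<bar>^5)"
        unfolding G_def C_def by (simp add: field_simps)
    qed
    also have "\<dots> = C / y^4 * (\<Sum>m\<in>Ms. 1 / \<bar>of_int m\<bar>^5)"
      by (simp add: sum_distrib_left)
    also have "\<dots> \<le> C / y^4 * (17/8)"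
      using sum_inverse_abs_pow5_int_le[OF Ms] y unfolding C_def by (intro mult_left_mono) auto
    finally show ?thesis
      by simp
  qed
  moreover have "(\<lambda>p. - G (fst p) (snd p)) summable_on R"
    using summable unfolding G_def R_def by (simp add: summable_on_uminus case_prod_unfold)
  ultimately have "(\<Sum>\<^sub>\<infinity>p\<in>R. - G (fst p) (snd p)) \<le> 17/8 * (C / y^4)"
    by (intro infsum_le_finite_sums)
  then show ?thesis
    unfolding G_def R_def C_def by (simp add: infsum_uminus case_prod_unfold)
qed

lemma infsum_zeta3_term_deriv2_ge:
  fixes x y :: real
  assumes y: "0 < y" "3/4 \<le> y^2"
    and summable: "(\<lambda>(m, n). zeta3_term_deriv2 ((of_int m * x + of_int n)^2) ((of_int m)^2) y)
      summable_on UNIV - {(0, 0)}"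
  shows "12 * y - 17/8 * (12 * (37/1000 * (11/5) + 73/2000 * (6/5)) / y^4)
    \<le> (\<Sum>\<^sub>\<infinity>(m, n)\<in>UNIV - {(0, 0)}. zeta3_term_deriv2 ((of_int m * x + of_int n)^2) ((of_int m)^2) y)"
proof -
  let ?G = "\<lambda>(m, n). zeta3_term_deriv2 ((of_int m * x + of_int n)^2) ((of_int m)^2) y"
  define Z :: "(int \<times> int) set" where "Z = {0} \<times> (UNIV - {0})"
  define R :: "(int \<times> int) set" where "R = (UNIV - {0}) \<times> UNIV"
  have ZR: "UNIV - {(0, 0)} = Z \<union> R" "Z \<inter> R = {}"
    unfolding Z_def R_def by auto
  have summable_Z: "?G summable_on Z" and summable_R: "?G summable_on R"
    using summable by (rule summable_on_subset_banach; auto simp: ZR)+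
  have G_zero_row: "zeta3_term_deriv2 A 0 y = 6 * y / A^3" for A
    unfolding zeta3_term_deriv2_def by simp
  have "sum ?G {(0, 1), (0, -1)} \<le> infsum ?G Z"
    using y by (intro finite_sum_le_infsum[OF summable_Z]) (auto simp: Z_def G_zero_row)
  then have "12 * y \<le> infsum ?G Z"
    by (simp add: G_zero_row)
  moreover have "- (17/8 * (12 * (37/1000 * (11/5) + 73/2000 * (6/5)) / y^4)) \<le> infsum ?G R"
    using infsum_zeta3_term_deriv2_nonzero_rows_ge[OF y summable_R[unfolded R_def]]
    unfolding R_def .
  moreover have "infsum ?G (UNIV - {(0, 0)}) = infsum ?G Z + infsum ?G R"
    unfolding ZR(1) using summable_Z summable_R ZR(2) by (rule infsum_Un_disjoint)
  ultimately show ?thesis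
    by linarith
qed

theorem lemma4p7:
  fixes x y :: real
  assumes "y \<ge> sqrt 3 / 2"
  shows "deriv (deriv (\<lambda>t. epstein_zeta 3 (Complex x t))) y \<ge> 4"
proof -
  have "43/25 \<le> sqrt 3"
    by (rule real_le_rsqrt) (simp add: power_divide)
  then have y: "43/50 \<le> y" "0 < y"
    using assms by linarith+
  have "(sqrt 3 / 2)^2 \<le> y^2"
    using assms by (intro power_mono) auto
  then have y2: "3/4 \<le> y^2"
    by (simp add: power_divide)
  then have "(3/4)^2 \<le> (y^2)^2"
    by (intro power_mono) auto
  then have y4: "9/16 \<le> y^4"
    by (simp add: power_divide flip: power_mult)
  note has_sum = epstein_zeta_3_deriv2_has_sum[OF y(2), of x]
  have "12 * y - 17/8 * (12 * (37/1000 * (11/5) + 73/2000 * (6/5)) / y^4)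
      \<le> deriv (deriv (\<lambda>t. epstein_zeta 3 (Complex x t))) y"
    using infsum_zeta3_term_deriv2_ge[OF y(2) y2 has_sum_imp_summable[OF has_sum]]
    unfolding infsumI[OF has_sum] .
  moreover have "17/8 * (12 * (37/1000 * (11/5) + 73/2000 * (6/5)) / y^4)
      \<le> 17/8 * (12 * (37/1000 * (11/5) + 73/2000 * (6/5)) / (9/16))"
    using y4 by (intro mult_left_mono divide_left_mono) auto
  ultimately show ?thesis
    using y(1) by simp
qed

end
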